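(* Let $V$ and $W$ be pfd $B$-persistence modules, decomposed as $V\cong\bigoplus_{\mathcal{X}}V^{\mathcal{X}}$ and $W\cong\bigoplus_{\mathcal{X}}W^{\mathcal{X}}$, with $\mathcal{X}$ ranging over $\{\mathcal{U},\mathcal{D},\mathcal{B},\mathcal{L},\mathcal{R}\}$. For every $\epsilon\ge0$ the following are equivalent: - (i) $V$ and $W$ are $\Lambda_\epsilon$-interleaved; - (ii) $V^{\mathcal{X}}$ and $W^{\mathcal{X}}$ are $\Lambda_\epsilon$-interleaved for each $\mathcal{X}\in\{\mathcal{U},\mathcal{D},\mathcal{B},\mathcal{L},\mathcal{R}\}$.
   Context: Let $k$ be a field. The bipath poset $B$ has underlying set $(\mathbb{R}\times\{1,2\})\sqcup\{-\infty,+\infty\}$. Its order is: $x\le y$ iff $x=-\infty$, or $y=+\infty$, or $x=(s,i)$, $y=(t,i)$ with the same $i$ and $s\le t$. A $B$-persistence module is a functor from $B$ (as a category) to $k$-vector spaces; it is pfd if all spaces are finite-dimensional. An interval of $B$ is a nonempty convex and connected subset (convex: $p,q\in I$, $p\le r\le q$ imply $r\in I$; connected: any two elements are joined by a finite sequence in $I$ with consecutive ones comparable). $k_I$ denotes the interval module. Every pfd $B$-module decomposes uniquely (up to isomorphism and permutation) into interval modules. The types of intervals are: - $\mathcal{U}$: intervals contained in $\mathbb{R}\times\{1\}$; - $\mathcal{D}$: intervals contained in $\mathbb{R}\times\{2\}$; - $\mathcal{B}=\{B\}$; - $\mathcal{L}$: intervals $\neq B$ containing $-\infty$; - $\mathcal{R}$: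 intervals $\neq B$ containing $+\infty$. $V^{\mathcal{X}}$ denotes the direct sum of those interval summands of $V$ whose interval lies in $\mathcal{X}$; it is well defined up to isomorphism. For $\epsilon\ge0$, $\Lambda_\epsilon\colon B\to B$ sends $(r,i)\mapsto(r+\epsilon,i)$ and fixes $\pm\infty$. Then: - $V(\epsilon)_b=V_{\Lambda_\epsilon b}$ and $V(\epsilon)(b,b')=V(\Lambda_\epsilon b,\Lambda_\epsilon b')$; for a morphism $\phi$, $\phi(\epsilon)$ has components $\phi_{\Lambda_\epsilon b}$; - $V_{0\to\epsilon}\colon V\to V(\epsilon)$ has components $V(b,\Lambda_\epsilon b)$; - $V$ and $W$ are $\Lambda_\epsilon$-interleaved if there are $\alpha\colon V\to W(\epsilon)$ and $\beta\colon W\to V(\epsilon)$ with $\beta(\epsilon)\alpha=V_{0\to2\epsilon}$ and $\alpha(\epsilon)\beta=W_{0\to2\epsilon}$. *)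

theory Defs
  imports Complex_Main
begin

datatype lane = L1 | L2

datatype bpt = NInf | Pt real lane | PInf

definition ble :: "bpt \<Rightarrow> bpt \<Rightarrow> bool" where
  "ble x y \<longleftrightarrow> x = NInf \<or> y = PInf \<or> (\<exists>s t i. x = Pt s i \<and> y = Pt t i \<and> s \<le> t)"

fun lam :: "real \<Rightarrow> bpt \<Rightarrow> bpt" where
  "lam e NInf = NInf"
| "lam e (Pt r i) = Pt (r + e) i"
| "lam e PInf = PInf"

definition convex_B :: "bpt set \<Rightarrow> bool" where
  "convex_B I \<longleftrightarrow> (\<forall>p\<in>I. \<forall>q\<in>I. \<forall>r. ble p r \<and> ble r q \<longrightarrow> r \<in> I)"

definition connected_B :: "bpt set \<Rightarrow> bool" where
  "connected_B I \<longleftrightarrow> (\<forall>p\<in>I. \<forall>q\<in>I. \<exists>xs. xs \<noteq> [] \<and> hd xs = p \<and> last xs = q \<and> set xs \<subseteq> I \<and>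
      (\<forall>i. Suc i < length xs \<longrightarrow> ble (xs ! i) (xs ! Suc i) \<or> ble (xs ! Suc i) (xs ! i)))"

definition interval_B :: "bpt set \<Rightarrow> bool" where
  "interval_B I \<longleftrightarrow> I \<noteq> {} \<and> convex_B I \<and> connected_B I"

datatype itype = TU | TD | TB | TL | TR

fun in_itype :: "itype \<Rightarrow> bpt set \<Rightarrow> bool" where
  "in_itype TU I \<longleftrightarrow> interval_B I \<and> I \<subseteq> range (\<lambda>r. Pt r L1)"
| "in_itype TD I \<longleftrightarrow> interval_B I \<and> I \<subseteq> range (\<lambda>r. Pt r L2)"
| "in_itype TB I \<longleftrightarrow> I = UNIV"
| "in_itype TL I \<longleftrightarrow> interval_B I \<and> I \<noteq> UNIV \<and> NInf \<in> I"
| "in_itype TR I \<longleftrightarrow> interval_B I \<and> I \<noteq> UNIV \<and> PInf \<in> I"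

text \<open>A B-persistence module over the field 'k (scalar multiplication s on the ambient
  k-vector space 'v) is given by subspaces Sp b of 'v and structure maps Mp b b' for b \<le> b'
  (the values of Mp on non-comparable pairs, and outside Sp b, are irrelevant).\<close>

definition lin_on :: "('k::field \<Rightarrow> 'v::ab_group_add \<Rightarrow> 'v) \<Rightarrow> ('k \<Rightarrow> 'w::ab_group_add \<Rightarrow> 'w)
    \<Rightarrow> 'v set \<Rightarrow> ('v \<Rightarrow> 'w) \<Rightarrow> bool" where
  "lin_on s1 s2 A f \<longleftrightarrow> (\<forall>x\<in>A. \<forall>y\<in>A. f (x + y) = f x + f y) \<and> (\<forall>c. \<forall>x\<in>A. f (s1 c x) = s2 c (f x))"

definition pmod :: "('k::field \<Rightarrow> 'v::ab_group_add \<Rightarrow> 'v) \<Rightarrow> (bpt \<Rightarrow> 'v set)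
    \<Rightarrow> (bpt \<Rightarrow> bpt \<Rightarrow> 'v \<Rightarrow> 'v) \<Rightarrow> bool" where
  "pmod s Sp Mp \<longleftrightarrow> vector_space s \<and> (\<forall>b. module.subspace s (Sp b))
     \<and> (\<forall>b b'. ble b b' \<longrightarrow> lin_on s s (Sp b) (Mp b b') \<and> Mp b b' ` Sp b \<subseteq> Sp b')
     \<and> (\<forall>b. \<forall>x\<in>Sp b. Mp b b x = x)
     \<and> (\<forall>b b' b''. ble b b' \<longrightarrow> ble b' b'' \<longrightarrow> (\<forall>x\<in>Sp b. Mp b' b'' (Mp b b' x) = Mp b b'' x))"

definition pfd :: "('k::field \<Rightarrow> 'v::ab_group_add \<Rightarrow> 'v) \<Rightarrow> (bpt \<Rightarrow> 'v set)
    \<Rightarrow> (bpt \<Rightarrow> bpt \<Rightarrow> 'v \<Rightarrow> 'v) \<Rightarrow> bool" where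
  "pfd s Sp Mp \<longleftrightarrow> pmod s Sp Mp \<and> (\<forall>b. \<exists>F. finite F \<and> F \<subseteq> Sp b \<and> module.span s F = Sp b)"

definition morph :: "('k::field \<Rightarrow> 'v::ab_group_add \<Rightarrow> 'v) \<Rightarrow> (bpt \<Rightarrow> 'v set) \<Rightarrow> (bpt \<Rightarrow> bpt \<Rightarrow> 'v \<Rightarrow> 'v)
    \<Rightarrow> ('k \<Rightarrow> 'w::ab_group_add \<Rightarrow> 'w) \<Rightarrow> (bpt \<Rightarrow> 'w set) \<Rightarrow> (bpt \<Rightarrow> bpt \<Rightarrow> 'w \<Rightarrow> 'w)
    \<Rightarrow> (bpt \<Rightarrow> 'v \<Rightarrow> 'w) \<Rightarrow> bool" where
  "morph s1 Sp1 Mp1 s2 Sp2 Mp2 \<phi> \<longleftrightarrow>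
     (\<forall>b. lin_on s1 s2 (Sp1 b) (\<phi> b) \<and> \<phi> b ` Sp1 b \<subseteq> Sp2 b)
     \<and> (\<forall>b b'. ble b b' \<longrightarrow> (\<forall>x\<in>Sp1 b. \<phi> b' (Mp1 b b' x) = Mp2 b b' (\<phi> b x)))"

definition mod_iso :: "('k::field \<Rightarrow> 'v::ab_group_add \<Rightarrow> 'v) \<Rightarrow> (bpt \<Rightarrow> 'v set) \<Rightarrow> (bpt \<Rightarrow> bpt \<Rightarrow> 'v \<Rightarrow> 'v)
    \<Rightarrow> ('k \<Rightarrow> 'w::ab_group_add \<Rightarrow> 'w) \<Rightarrow> (bpt \<Rightarrow> 'w set) \<Rightarrow> (bpt \<Rightarrow> bpt \<Rightarrow> 'w \<Rightarrow> 'w) \<Rightarrow> bool" where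
  "mod_iso s1 Sp1 Mp1 s2 Sp2 Mp2 \<longleftrightarrow> (\<exists>\<phi> \<psi>. morph s1 Sp1 Mp1 s2 Sp2 Mp2 \<phi> \<and> morph s2 Sp2 Mp2 s1 Sp1 Mp1 \<psi>
     \<and> (\<forall>b. (\<forall>x\<in>Sp1 b. \<psi> b (\<phi> b x) = x) \<and> (\<forall>y\<in>Sp2 b. \<phi> b (\<psi> b y) = y)))"

text \<open>The interval module k_I, realised on the ambient space k itself.\<close>
definition ivSp :: "bpt set \<Rightarrow> bpt \<Rightarrow> 'k::field set" where
  "ivSp I b = (if b \<in> I then UNIV else {0})"

definition ivMp :: "bpt set \<Rightarrow> bpt \<Rightarrow> bpt \<Rightarrow> 'k::field \<Rightarrow> 'k" where
  "ivMp I b b' x = (if b \<in> I \<and> b' \<in> I then x else 0)"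

definition shSp :: "real \<Rightarrow> (bpt \<Rightarrow> 'v set) \<Rightarrow> bpt \<Rightarrow> 'v set" where
  "shSp e Sp b = Sp (lam e b)"

definition shMp :: "real \<Rightarrow> (bpt \<Rightarrow> bpt \<Rightarrow> 'v \<Rightarrow> 'v) \<Rightarrow> bpt \<Rightarrow> bpt \<Rightarrow> 'v \<Rightarrow> 'v" where
  "shMp e Mp b b' = Mp (lam e b) (lam e b')"

definition interleaved :: "real \<Rightarrow> ('k::field \<Rightarrow> 'v::ab_group_add \<Rightarrow> 'v) \<Rightarrow> (bpt \<Rightarrow> 'v set) \<Rightarrow> (bpt \<Rightarrow> bpt \<Rightarrow> 'v \<Rightarrow> 'v)
    \<Rightarrow> ('k \<Rightarrow> 'w::ab_group_add \<Rightarrow> 'w) \<Rightarrow> (bpt \<Rightarrow> 'w set) \<Rightarrow> (bpt \<Rightarrow> bpt \<Rightarrow> 'w \<Rightarrow> 'w) \<Rightarrow> bool" where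
  "interleaved e s1 Sp1 Mp1 s2 Sp2 Mp2 \<longleftrightarrow>
    (\<exists>\<alpha> \<beta>. morph s1 Sp1 Mp1 s2 (shSp e Sp2) (shMp e Mp2) \<alpha>
         \<and> morph s2 Sp2 Mp2 s1 (shSp e Sp1) (shMp e Mp1) \<beta>
         \<and> (\<forall>b. \<forall>x\<in>Sp1 b. \<beta> (lam e b) (\<alpha> b x) = Mp1 b (lam (2 * e) b) x)
         \<and> (\<forall>b. \<forall>y\<in>Sp2 b. \<alpha> (lam e b) (\<beta> b y) = Mp2 b (lam (2 * e) b) y))"

definition submod :: "('k::field \<Rightarrow> 'v::ab_group_add \<Rightarrow> 'v) \<Rightarrow> (bpt \<Rightarrow> 'v set) \<Rightarrow> (bpt \<Rightarrow> bpt \<Rightarrow> 'v \<Rightarrow> 'v)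
    \<Rightarrow> (bpt \<Rightarrow> 'v set) \<Rightarrow> bool" where
  "submod s Sp Mp S \<longleftrightarrow> (\<forall>b. module.subspace s (S b) \<and> S b \<subseteq> Sp b)
     \<and> (\<forall>b b'. ble b b' \<longrightarrow> Mp b b' ` S b \<subseteq> S b')"

text \<open>(Sp, Mp) is the internal direct sum of the interval submodules N j (j \<in> J), where
  N j is isomorphic to the interval module k_{Iv j}.\<close>
definition interval_decomp :: "('k::field \<Rightarrow> 'v::ab_group_add \<Rightarrow> 'v) \<Rightarrow> (bpt \<Rightarrow> 'v set) \<Rightarrow> (bpt \<Rightarrow> bpt \<Rightarrow> 'v \<Rightarrow> 'v)
    \<Rightarrow> 'j set \<Rightarrow> ('j \<Rightarrow> bpt \<Rightarrow> 'v set) \<Rightarrow> ('j \<Rightarrow> bpt set) \<Rightarrow> bool" where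
  "interval_decomp s Sp Mp J N Iv \<longleftrightarrow>
     (\<forall>j\<in>J. interval_B (Iv j) \<and> submod s Sp Mp (N j)
            \<and> mod_iso s (N j) Mp ((*) :: 'k \<Rightarrow> 'k \<Rightarrow> 'k) (ivSp (Iv j)) (ivMp (Iv j)))
     \<and> (\<forall>b. Sp b = module.span s (\<Union>j\<in>J. N j b))
     \<and> (\<forall>b F x. finite F \<longrightarrow> F \<subseteq> J \<longrightarrow> (\<forall>j\<in>F. x j \<in> N j b) \<longrightarrow> (\<Sum>j\<in>F. x j) = 0
             \<longrightarrow> (\<forall>j\<in>F. x j = 0))"

text \<open>V^X: the (internal) direct sum of the summands whose interval is of type X.\<close>
definition partSp :: "('k::field \<Rightarrow> 'v::ab_group_add \<Rightarrow> 'v) \<Rightarrow> 'j set \<Rightarrow> ('j \<Rightarrow> bpt \<Rightarrow> 'v set)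
    \<Rightarrow> ('j \<Rightarrow> bpt set) \<Rightarrow> itype \<Rightarrow> bpt \<Rightarrow> 'v set" where
  "partSp s J N Iv X b = module.span s (\<Union>j\<in>{j\<in>J. in_itype X (Iv j)}. N j b)"

end

theory Submission
  imports Defs
begin

text \<open>
  Interval summands of the five types are told apart by their behaviour at the ends of B:
  summands of type L or B are generated by their value at minus infinity, where the others
  vanish; summands of type R or B embed into their value at plus infinity, where the others
  vanish; and summands of type U or D live on lane 1 or lane 2. Hence for distinct types X and Y
  either every morphism from V^X to a shift of W^Y or every morphism from W^Y to a shift of V^X
  is zero. Projecting an interleaving of V and W onto the X-parts thus gives an interleaving of
  V^X and W^X, because every cross term through some W^Y with Y different from X vanishes;
  conversely, the sum of interleavings of the parts is an interleaving of V and W.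
\<close>

section \<open>Intervals of the bipath poset\<close>

lemma ble_NInf [simp]: "ble NInf b"
  and ble_PInf [simp]: "ble b PInf"
  by (auto simp: ble_def)

lemma ble_lam: "ble b b' \<Longrightarrow> ble (lam e b) (lam e b')"
  by (cases b; cases b') (auto simp: ble_def)

lemma ble_lam_self: "0 \<le> e \<Longrightarrow> ble b (lam e b)"
  by (cases b) (auto simp: ble_def)

lemma lam_lam: "lam e (lam e' b) = lam (e + e') b"
  by (cases b) (auto simp: algebra_simps)

definition lane_set :: "lane \<Rightarrow> bpt set" where
  "lane_set i = range (\<lambda>r. Pt r i)"

lemma lam_in_lane_set_iff [simp]: "lam e b \<in> lane_set i \<longleftrightarrow> b \<in> lane_set i"
  by (cases b) (auto simp: lane_set_def)

lemma lane_sets_disjoint: "lane_set L1 \<inter> lane_set L2 = {}"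
  by (auto simp: lane_set_def)

lemma convex_B_UNIV: "convex_B I \<Longrightarrow> NInf \<in> I \<Longrightarrow> PInf \<in> I \<Longrightarrow> I = UNIV"
  unfolding convex_B_def using ble_NInf ble_PInf by blast

lemma interval_B_in_lane_set:
  assumes I: "interval_B I" and "NInf \<notin> I" "PInf \<notin> I"
  obtains i where "I \<subseteq> lane_set i"
proof -
  have finite_pt: "p \<in> I \<Longrightarrow> \<exists>r i. p = Pt r i" for p
    using assms by (cases p) auto
  from I obtain r0 i where p: "Pt r0 i \<in> I"
    unfolding interval_B_def using finite_pt by blast
  have "q \<in> lane_set i" if q: "q \<in> I" for q
  proof -
    obtain xs where xs: "xs \<noteq> []" "hd xs = Pt r0 i" "last xs = q" "set xs \<subseteq> I"
      and steps: "\<And>k. Suc k < length xs \<Longrightarrow> ble (xs ! k) (xs ! Suc k) \<or> ble (xs ! Suc k) (xs ! k)"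
      using I p q unfolding interval_B_def connected_B_def by meson
    \<comment> \<open>two comparable finite points lie on the same lane\<close>
    have "k < length xs \<Longrightarrow> xs ! k \<in> lane_set i" for k
    proof (induction k)
      case 0
      then show ?case using xs(1,2) by (simp add: hd_conv_nth[symmetric] lane_set_def)
    next
      case (Suc k)
      obtain r' i' where "xs ! Suc k = Pt r' i'"
        using finite_pt Suc.prems xs(4) nth_mem by blast
      then show ?case
        using Suc steps[OF Suc.prems] by (auto simp: lane_set_def ble_def)
    qed
    then show ?thesis
      using xs(1,3) by (metis last_conv_nth diff_less length_greater_0_conv zero_less_one)
  qed
  then show thesis using that by blast
qed

lemma in_itype_exists:
  assumes I: "interval_B I"
  obtains X where "in_itype X I"
proof (cases "NInf \<in> I"; cases "PInf \<in> I")
  assume "NInf \<notin> I" "PInf \<notin> I"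
  then obtain i where "I \<subseteq> lane_set i"
    using interval_B_in_lane_set I by blast
  then show thesis
    using that[of TU] that[of TD] I by (cases i) (auto simp: lane_set_def)
qed (use that[of TB] that[of TL] that[of TR] I convex_B_UNIV interval_B_def in auto)

lemma in_itype_NInf_iff: "in_itype X I \<Longrightarrow> NInf \<in> I \<longleftrightarrow> X \<in> {TL, TB}"
  and in_itype_PInf_iff: "in_itype X I \<Longrightarrow> PInf \<in> I \<longleftrightarrow> X \<in> {TR, TB}"
  by (cases X; force simp: interval_B_def dest: convex_B_UNIV)+

lemma in_itype_lane_set: "in_itype TU I \<Longrightarrow> I \<subseteq> lane_set L1"
  "in_itype TD I \<Longrightarrow> I \<subseteq> lane_set L2"
  by (auto simp: lane_set_def)

lemma in_itype_unique: "in_itype X I \<Longrightarrow> in_itype Y I \<Longrightarrow> X = Y"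
proof -
  assume X: "in_itype X I" and Y: "in_itype Y I"
  have "I \<noteq> {}" if "in_itype TU I \<or> in_itype TD I"
    using that by (auto simp: interval_B_def)
  then have "\<not> (in_itype TU I \<and> in_itype TD I)"
    using lane_sets_disjoint in_itype_lane_set by blast
  then show "X = Y"
    using in_itype_NInf_iff[OF X] in_itype_NInf_iff[OF Y]
      in_itype_PInf_iff[OF X] in_itype_PInf_iff[OF Y] X Y
    by (cases X; cases Y) auto
qed

lemma UNIV_itype: "UNIV = {TU, TD, TB, TL, TR}"
  using itype.exhaust by auto

lemma finite_itype [simp]: "finite (UNIV :: itype set)"
  by (simp add: UNIV_itype)

lemma lin_onI:
  "(\<And>x y. x \<in> A \<Longrightarrow> y \<in> A \<Longrightarrow> f (x + y) = f x + f y) \<Longrightarrow>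
   (\<And>c x. x \<in> A \<Longrightarrow> f (s1 c x) = s2 c (f x)) \<Longrightarrow> lin_on s1 s2 A f"
  unfolding lin_on_def by blast

lemma lin_on_add: "lin_on s1 s2 A f \<Longrightarrow> x \<in> A \<Longrightarrow> y \<in> A \<Longrightarrow> f (x + y) = f x + f y"
  and lin_on_scale: "lin_on s1 s2 A f \<Longrightarrow> x \<in> A \<Longrightarrow> f (s1 c x) = s2 c (f x)"
  unfolding lin_on_def by blast+

lemma lin_on_zero: "lin_on s1 s2 A f \<Longrightarrow> 0 \<in> A \<Longrightarrow> f 0 = 0"
  using lin_on_add[of s1 s2 A f 0 0] by simp

lemma lin_on_subset: "lin_on s1 s2 A f \<Longrightarrow> B \<subseteq> A \<Longrightarrow> lin_on s1 s2 B f"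
  unfolding lin_on_def by blast

lemma lin_on_comp:
  "lin_on s1 s2 A f \<Longrightarrow> lin_on s2 s3 B g \<Longrightarrow> f ` A \<subseteq> B \<Longrightarrow> lin_on s1 s3 A (\<lambda>x. g (f x))"
  unfolding lin_on_def image_subset_iff by simp

lemma (in vector_space) lin_on_sum:
  assumes f: "lin_on s1 s2 A f" and A: "subspace A" and g: "\<And>i. i \<in> F \<Longrightarrow> g i \<in> A"
  shows "f (\<Sum>i\<in>F. g i) = (\<Sum>i\<in>F. f (g i))"
  using g
proof (induction F rule: infinite_finite_induct)
  case (insert i F)
  have "f (g i + sum g F) = f (g i) + f (sum g F)"
    using lin_on_add[OF f] subspace_sum[OF A, of F g] insert.prems by simp
  then show ?case using insert by simp
qed (use lin_on_zero[OF f subspace_0[OF A]] in simp_all)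

lemma (in vector_space) lin_on_sum_maps:
  assumes "\<And>i. i \<in> F \<Longrightarrow> lin_on s1 scale A (f i)"
  shows "lin_on s1 scale A (\<lambda>x. \<Sum>i\<in>F. f i x)"
proof (rule lin_onI)
  fix x y assume "x \<in> A" "y \<in> A"
  then have "f i (x + y) = f i x + f i y" if "i \<in> F" for i
    using lin_on_add[OF assms[OF that]] by blast
  then show "(\<Sum>i\<in>F. f i (x + y)) = (\<Sum>i\<in>F. f i x) + (\<Sum>i\<in>F. f i y)"
    by (simp add: sum.distrib[symmetric])
next
  fix c x assume "x \<in> A"
  then have "f i (s1 c x) = c *s f i x" if "i \<in> F" for i
    using lin_on_scale[OF assms[OF that]] by blast
  then show "(\<Sum>i\<in>F. f i (s1 c x)) = c *s (\<Sum>i\<in>F. f i x)"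
    by (simp add: scale_sum_right)
qed

lemma (in vector_space) subspace_image_lin_on:
  assumes A: "subspace A" and f: "lin_on scale scale A f"
  shows "subspace (f ` A)"
proof (rule subspaceI)
  show "0 \<in> f ` A" using lin_on_zero[OF f subspace_0[OF A]] subspace_0[OF A] by force
next
  fix x y assume "x \<in> f ` A" "y \<in> f ` A"
  then obtain x' y' where "x' \<in> A" "y' \<in> A" "x = f x'" "y = f y'" by blast
  then show "x + y \<in> f ` A"
    using lin_on_add[OF f] subspace_add[OF A] by (metis image_eqI)
next
  fix c x assume "x \<in> f ` A"
  then obtain x' where "x' \<in> A" "x = f x'" by blast
  then show "c *s x \<in> f ` A"
    using lin_on_scale[OF f] subspace_scale[OF A] by (metis image_eqI)
qed

lemma (in vector_space) subspace_vimage_lin_on: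
  assumes A: "subspace A" and f: "lin_on scale scale A f" and T: "subspace T"
  shows "subspace {x \<in> A. f x \<in> T}"
proof (rule subspaceI)
  show "0 \<in> {x \<in> A. f x \<in> T}"
    using lin_on_zero[OF f] subspace_0[OF A] subspace_0[OF T] by simp
next
  fix x y assume "x \<in> {x \<in> A. f x \<in> T}" "y \<in> {x \<in> A. f x \<in> T}"
  then show "x + y \<in> {x \<in> A. f x \<in> T}"
    using lin_on_add[OF f] subspace_add[OF A] subspace_add[OF T] by simp
next
  fix c x assume "x \<in> {x \<in> A. f x \<in> T}"
  then show "c *s x \<in> {x \<in> A. f x \<in> T}"
    using lin_on_scale[OF f] subspace_scale[OF A] subspace_scale[OF T] by simp
qed

lemma morphD:
  assumes "morph s1 Sp1 Mp1 s2 Sp2 Mp2 f"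
  shows morph_lin_on: "lin_on s1 s2 (Sp1 b) (f b)"
    and morph_in: "x \<in> Sp1 b \<Longrightarrow> f b x \<in> Sp2 b"
    and morph_nat: "ble b b' \<Longrightarrow> x \<in> Sp1 b \<Longrightarrow> f b' (Mp1 b b' x) = Mp2 b b' (f b x)"
  using assms unfolding morph_def by blast+

lemma morphI:
  assumes "\<And>b. lin_on s1 s2 (Sp1 b) (f b)" "\<And>b x. x \<in> Sp1 b \<Longrightarrow> f b x \<in> Sp2 b"
    "\<And>b b' x. ble b b' \<Longrightarrow> x \<in> Sp1 b \<Longrightarrow> f b' (Mp1 b b' x) = Mp2 b b' (f b x)"
  shows "morph s1 Sp1 Mp1 s2 Sp2 Mp2 f"
  unfolding morph_def using assms by blast

lemma morph_zero: "morph s1 Sp1 Mp1 s2 Sp2 Mp2 f \<Longrightarrow> 0 \<in> Sp1 b \<Longrightarrow> f b 0 = 0"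
  by (rule lin_on_zero[OF morph_lin_on])

lemma morph_vanishes_if_generated_at_NInf:
  assumes f: "morph s1 SA MA s2 SC MC f"
    and generated: "\<And>x. x \<in> SA b \<Longrightarrow> \<exists>y\<in>SA NInf. MA NInf b y = x"
    and SC_NInf: "SC NInf \<subseteq> {0}" and "MC NInf b 0 = 0"
    and x: "x \<in> SA b"
  shows "f b x = 0"
proof -
  obtain y where y: "y \<in> SA NInf" "MA NInf b y = x" using generated[OF x] by blast
  have "f b x = MC NInf b (f NInf y)" using morph_nat[OF f ble_NInf[of b] y(1)] y(2) by simp
  also have "f NInf y = 0" using SC_NInf morph_in[OF f y(1)] by blast
  finally show ?thesis using \<open>MC NInf b 0 = 0\<close> by simp
qed

lemma morph_vanishes_if_inj_to_PInf:
  assumes f: "morph s1 SA MA s2 SC MC f"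
    and SA_PInf: "SA PInf \<subseteq> {0}" and MA: "\<And>x. x \<in> SA b \<Longrightarrow> MA b PInf x \<in> SA PInf"
    and inj: "\<And>z. z \<in> SC b \<Longrightarrow> MC b PInf z = 0 \<Longrightarrow> z = 0"
    and x: "x \<in> SA b"
  shows "f b x = 0"
proof -
  have "MA b PInf x = 0" "0 \<in> SA PInf" using MA[OF x] SA_PInf by auto
  then have "MC b PInf (f b x) = 0"
    using morph_nat[OF f ble_PInf x] morph_zero[OF f] by simp
  then show ?thesis using inj morph_in[OF f x] by blast
qed

lemma morph_vanishes_if_disjoint_supports:
  assumes f: "morph s1 SA MA s2 SC MC f"
    and SA: "\<And>b. b \<notin> Z \<Longrightarrow> SA b \<subseteq> {0}" and SC: "\<And>b. b \<in> Z \<Longrightarrow> SC b \<subseteq> {0}"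
    and x: "x \<in> SA b"
  shows "f b x = 0"
  using SA SC morph_in[OF f x] morph_zero[OF f] x by (cases "b \<in> Z") auto

section \<open>Modules isomorphic to interval modules\<close>

lemma ivMp_from_member: "a \<in> I \<Longrightarrow> v \<in> ivSp I b \<Longrightarrow> ivMp I a b v = v"
  and ivMp_to_member: "b \<in> I \<Longrightarrow> v \<in> ivSp I a \<Longrightarrow> ivMp I a b v = v"
  by (auto simp: ivSp_def ivMp_def)

context
  fixes s :: "'k::field \<Rightarrow> 'v::ab_group_add \<Rightarrow> 'v" and S Mp I
  assumes iso: "mod_iso s S Mp ((*) :: 'k \<Rightarrow> 'k \<Rightarrow> 'k) (ivSp I) (ivMp I)"
begin

lemma iso_interval_module_zero_outside:
  assumes "b \<notin> I" and x: "x \<in> S b"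
  shows "x = 0"
proof -
  obtain \<phi> \<psi> where \<phi>: "morph s S Mp (*) (ivSp I) (ivMp I) \<phi>"
    and \<psi>: "morph (*) (ivSp I) (ivMp I) s S Mp \<psi>" and \<psi>\<phi>: "\<psi> b (\<phi> b x) = x"
    using iso x unfolding mod_iso_def by blast
  have "\<phi> b x = 0" using morph_in[OF \<phi> x] \<open>b \<notin> I\<close> by (simp add: ivSp_def)
  then show ?thesis using \<psi>\<phi> morph_zero[OF \<psi>] by (simp add: ivSp_def)
qed

lemma iso_interval_module_generated_at_NInf:
  assumes "NInf \<in> I" and x: "x \<in> S b"
  shows "\<exists>y\<in>S NInf. Mp NInf b y = x"
proof -
  obtain \<phi> \<psi> where \<phi>: "morph s S Mp (*) (ivSp I) (ivMp I) \<phi>"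
    and \<psi>: "morph (*) (ivSp I) (ivMp I) s S Mp \<psi>" and \<psi>\<phi>: "\<psi> b (\<phi> b x) = x"
    using iso x unfolding mod_iso_def by blast
  have "\<phi> b x \<in> ivSp I NInf" using \<open>NInf \<in> I\<close> by (simp add: ivSp_def)
  moreover have "ivMp I NInf b (\<phi> b x) = \<phi> b x"
    using ivMp_from_member[OF \<open>NInf \<in> I\<close> morph_in[OF \<phi> x]] .
  ultimately show ?thesis
    using morph_in[OF \<psi>] morph_nat[OF \<psi> ble_NInf] \<psi>\<phi> by metis
qed

lemma iso_interval_module_inj_to_PInf:
  assumes "PInf \<in> I" and x: "x \<in> S b" and "Mp b PInf x = 0"
  shows "x = 0"
proof -
  obtain \<phi> \<psi> where \<phi>: "morph s S Mp (*) (ivSp I) (ivMp I) \<phi>"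
    and \<psi>: "morph (*) (ivSp I) (ivMp I) s S Mp \<psi>" and \<psi>\<phi>: "\<psi> b (\<phi> b x) = x"
    using iso x unfolding mod_iso_def by blast
  have zero_in_S: "0 \<in> S PInf"
    using morph_in[OF \<psi>, of 0 PInf] morph_zero[OF \<psi>] by (simp add: ivSp_def)
  have "\<phi> b x = ivMp I b PInf (\<phi> b x)"
    using ivMp_to_member[OF \<open>PInf \<in> I\<close> morph_in[OF \<phi> x]] ..
  also have "\<dots> = \<phi> PInf (Mp b PInf x)"
    using morph_nat[OF \<phi> ble_PInf x] ..
  also have "\<dots> = 0"
    using \<open>Mp b PInf x = 0\<close> morph_zero[OF \<phi> zero_in_S] by simp
  finally show ?thesis using \<psi>\<phi> morph_zero[OF \<psi>] by (simp add: ivSp_def)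
qed

end

section \<open>Modules with an interval decomposition\<close>

locale interval_decomposed =
  fixes s :: "'k::field \<Rightarrow> 'v::ab_group_add \<Rightarrow> 'v"
    and Sp :: "bpt \<Rightarrow> 'v set" and Mp :: "bpt \<Rightarrow> bpt \<Rightarrow> 'v \<Rightarrow> 'v"
    and J :: "'j set" and N :: "'j \<Rightarrow> bpt \<Rightarrow> 'v set" and Iv :: "'j \<Rightarrow> bpt set"
  assumes pmod: "pmod s Sp Mp" and decomp: "interval_decomp s Sp Mp J N Iv"
begin

sublocale vector_space s
  using pmod by (simp add: pmod_def)

lemma Sp_subspace: "subspace (Sp b)"
  and Mp_lin_on: "ble b b' \<Longrightarrow> lin_on s s (Sp b) (Mp b b')"
  using pmod unfolding pmod_def by blast+

lemma Mp_zero: "ble b b' \<Longrightarrow> Mp b b' 0 = 0"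
  using lin_on_zero[OF Mp_lin_on subspace_0[OF Sp_subspace]] .

lemma Mp_sum: "ble b b' \<Longrightarrow> (\<And>i. i \<in> F \<Longrightarrow> g i \<in> Sp b) \<Longrightarrow>
    Mp b b' (\<Sum>i\<in>F. g i) = (\<Sum>i\<in>F. Mp b b' (g i))"
  using lin_on_sum[OF Mp_lin_on Sp_subspace] .

lemma summand:
  assumes "j \<in> J"
  shows summand_interval: "interval_B (Iv j)"
    and summand_subspace: "subspace (N j b)"
    and summand_subset: "N j b \<subseteq> Sp b"
    and summand_Mp: "ble b b' \<Longrightarrow> x \<in> N j b \<Longrightarrow> Mp b b' x \<in> N j b'"
    and summand_iso: "mod_iso s (N j) Mp ((*) :: 'k \<Rightarrow> 'k \<Rightarrow> 'k) (ivSp (Iv j)) (ivMp (Iv j))"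
proof -
  have "interval_B (Iv j) \<and> submod s Sp Mp (N j)
      \<and> mod_iso s (N j) Mp ((*) :: 'k \<Rightarrow> 'k \<Rightarrow> 'k) (ivSp (Iv j)) (ivMp (Iv j))"
    using assms decomp unfolding interval_decomp_def by blast
  then show "interval_B (Iv j)" "subspace (N j b)" "N j b \<subseteq> Sp b"
    "ble b b' \<Longrightarrow> x \<in> N j b \<Longrightarrow> Mp b b' x \<in> N j b'"
    "mod_iso s (N j) Mp ((*) :: 'k \<Rightarrow> 'k \<Rightarrow> 'k) (ivSp (Iv j)) (ivMp (Iv j))"
    unfolding submod_def by blast+
qed

lemma Sp_eq_span_summands: "Sp b = span (\<Union>j\<in>J. N j b)"
  using decomp unfolding interval_decomp_def by blast

lemma summands_independent:
  "finite F \<Longrightarrow> F \<subseteq> J \<Longrightarrow> (\<And>j. j \<in> F \<Longrightarrow> x j \<in> N j b) \<Longrightarrow> sum x F = 0 \<Longrightarrow> j \<in> F \<Longrightarrow> x j = 0"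
  using decomp unfolding interval_decomp_def by blast

lemma span_summands_obtain_sum:
  assumes "J' \<subseteq> J" and "y \<in> span (\<Union>j\<in>J'. N j b)"
  obtains F x where "finite F" "F \<subseteq> J'" "\<And>j. j \<in> F \<Longrightarrow> x j \<in> N j b" "y = sum x F"
proof -
  have "\<exists>F x. finite F \<and> F \<subseteq> J' \<and> (\<forall>j\<in>F. x j \<in> N j b) \<and> y = sum x F"
    using assms(2)
  proof (induction rule: span_induct_alt)
    case base
    show ?case by (intro exI[of _ "{}"]) simp
  next
    case (step c z y)
    then obtain i F x where i: "i \<in> J'" "z \<in> N i b"
      and F: "finite F" "F \<subseteq> J'" "\<forall>j\<in>F. x j \<in> N j b" "y = sum x F"
      by blast
    define x' where "x' j = (if j = i then s c z else 0) + (if j \<in> F then x j else 0)" for j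
    have "s c z + y = sum x' (insert i F)"
      using F by (simp add: x'_def sum.distrib sum.If_cases Int_absorb1 subset_insertI)
    moreover have "x' j \<in> N j b" if "j \<in> insert i F" for j
    proof -
      have N: "subspace (N j b)" using that i F assms(1) summand_subspace by blast
      then show ?thesis
        unfolding x'_def using i F subspace_0[OF N] subspace_add[OF N] subspace_scale[OF N]
        by auto
    qed
    ultimately show ?case using i F by (intro exI[of _ "insert i F"] exI[of _ x']) auto
  qed
  then show thesis using that by blast
qed

lemma span_summands_disjoint:
  assumes "J1 \<subseteq> J" "J2 \<subseteq> J" "J1 \<inter> J2 = {}"
    and y1: "y \<in> span (\<Union>j\<in>J1. N j b)" and y2: "y \<in> span (\<Union>j\<in>J2. N j b)"
  shows "y = 0"
proof -
  obtain F1 x1 where F1: "finite F1" "F1 \<subseteq> J1" "\<And>j. j \<in> F1 \<Longrightarrow> x1 j \<in> N j b" "y = sum x1 F1"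
    using span_summands_obtain_sum[OF assms(1) y1] by blast
  obtain F2 x2 where F2: "finite F2" "F2 \<subseteq> J2" "\<And>j. j \<in> F2 \<Longrightarrow> x2 j \<in> N j b" "y = sum x2 F2"
    using span_summands_obtain_sum[OF assms(2) y2] by blast
  have disj: "F1 \<inter> F2 = {}" using F1(2) F2(2) assms(3) by blast
  define x where "x j = (if j \<in> F1 then x1 j else - x2 j)" for j
  have "sum x F2 = - sum x2 F2"
    unfolding sum_negf[symmetric] x_def using disj by (intro sum.cong) auto
  then have "sum x (F1 \<union> F2) = sum x1 F1 - sum x2 F2"
    using F1(1) F2(1) disj by (simp add: sum.union_disjoint x_def)
  then have "sum x (F1 \<union> F2) = 0" using F1(4) F2(4) by simp
  moreover have "x j \<in> N j b" if "j \<in> F1 \<union> F2" for j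
    using that F1(2,3) F2(2,3) assms(1,2) summand_subspace subspace_neg
    unfolding x_def by (metis Un_iff in_mono)
  ultimately have "x j = 0" if "j \<in> F1" for j
    using summands_independent[of "F1 \<union> F2" x] F1 F2 assms that by blast
  then show ?thesis using F1(4) by (simp add: x_def)
qed

abbreviation part :: "itype \<Rightarrow> bpt \<Rightarrow> 'v set" where
  "part \<equiv> partSp s J N Iv"

lemma part_eq: "part X b = span (\<Union>j\<in>{j\<in>J. in_itype X (Iv j)}. N j b)"
  by (simp add: partSp_def)

lemma part_subspace: "subspace (part X b)"
  by (simp add: part_eq)

lemma summand_in_part: "j \<in> J \<Longrightarrow> in_itype X (Iv j) \<Longrightarrow> x \<in> N j b \<Longrightarrow> x \<in> part X b"
  unfolding part_eq by (rule span_base) blast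

lemma part_subset: "part X b \<subseteq> Sp b"
  unfolding part_eq using summand_subset by (intro span_minimal Sp_subspace) blast

lemma part_Mp:
  assumes "ble b b'" and "x \<in> part X b"
  shows "Mp b b' x \<in> part X b'"
proof -
  have "part X b \<subseteq> {x \<in> Sp b. Mp b b' x \<in> part X b'}"
    unfolding part_eq[of X b]
  proof (rule span_minimal)
    show "subspace {x \<in> Sp b. Mp b b' x \<in> part X b'}"
      using subspace_vimage_lin_on[OF Sp_subspace Mp_lin_on[OF assms(1)] part_subspace] .
    show "(\<Union>j\<in>{j\<in>J. in_itype X (Iv j)}. N j b) \<subseteq> {x \<in> Sp b. Mp b b' x \<in> part X b'}"
      using summand_subset summand_Mp[OF _ assms(1)] summand_in_part by blast
  qed
  then show ?thesis using assms(2) by blast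
qed

lemma sum_parts_exists:
  assumes "x \<in> Sp b"
  obtains f where "\<And>X. f X \<in> part X b" "x = (\<Sum>X\<in>UNIV. f X)"
proof -
  have "x \<in> span (\<Union>j\<in>J. N j b)" using assms Sp_eq_span_summands by simp
  then have "\<exists>f. (\<forall>X. f X \<in> part X b) \<and> x = (\<Sum>X\<in>UNIV. f X)"
  proof (induction rule: span_induct_alt)
    case base
    show ?case using subspace_0[OF part_subspace] by (intro exI[of _ "\<lambda>_. 0"]) simp
  next
    case (step c z y)
    then obtain j f where j: "j \<in> J" "z \<in> N j b"
      and f: "\<forall>X. f X \<in> part X b" "y = (\<Sum>X\<in>UNIV. f X)"
      by blast
    obtain X where X: "in_itype X (Iv j)" using in_itype_exists summand_interval[OF j(1)] .
    define f' where "f' Y = (if Y = X then s c z else 0) + f Y" for Y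
    have "f' Y \<in> part Y b" for Y
      using f summand_in_part[OF j(1) X j(2)] subspace_0[OF part_subspace]
        subspace_add[OF part_subspace] subspace_scale[OF part_subspace]
      unfolding f'_def by simp
    moreover have "s c z + y = (\<Sum>Y\<in>UNIV. f' Y)" using f(2) by (simp add: f'_def sum.distrib)
    ultimately show ?case by blast
  qed
  then show thesis using that by blast
qed

lemma sum_parts_unique:
  assumes f: "\<And>Y. f Y \<in> part Y b" and sum_zero: "(\<Sum>Y\<in>UNIV. f Y) = 0"
  shows "f X = 0"
proof -
  let ?J_X = "{j \<in> J. in_itype X (Iv j)}" and ?J_other = "{j \<in> J. \<not> in_itype X (Iv j)}"
  have "part Y b \<subseteq> span (\<Union>j\<in>?J_other. N j b)" if "Y \<noteq> X" for Y
    unfolding part_eq using that in_itype_unique by (intro span_mono) blast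
  then have "(\<Sum>Y\<in>UNIV - {X}. f Y) \<in> span (\<Union>j\<in>?J_other. N j b)"
    using f by (intro span_sum) blast
  moreover have "f X = - (\<Sum>Y\<in>UNIV - {X}. f Y)"
    using sum_zero sum.remove[of UNIV X f] by (simp add: eq_neg_iff_add_eq_0)
  ultimately have "f X \<in> span (\<Union>j\<in>?J_other. N j b)" using span_neg by metis
  moreover have "f X \<in> span (\<Union>j\<in>?J_X. N j b)" using f part_eq by blast
  ultimately show ?thesis by (intro span_summands_disjoint[of ?J_X ?J_other]) auto
qed

lemma part_zero_outside:
  assumes "\<And>j. j \<in> J \<Longrightarrow> in_itype X (Iv j) \<Longrightarrow> b \<notin> Iv j"
  shows "part X b \<subseteq> {0}"
  unfolding part_eq
  by (rule span_minimal)
    (use assms iso_interval_module_zero_outside[OF summand_iso] in auto)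

lemma part_zero_at_NInf: "X \<notin> {TL, TB} \<Longrightarrow> part X NInf \<subseteq> {0}"
  and part_zero_at_PInf: "X \<notin> {TR, TB} \<Longrightarrow> part X PInf \<subseteq> {0}"
  using part_zero_outside in_itype_NInf_iff in_itype_PInf_iff by meson+

lemma part_zero_off_lane_set:
  "b \<notin> lane_set L1 \<Longrightarrow> part TU b \<subseteq> {0}"
  "b \<notin> lane_set L2 \<Longrightarrow> part TD b \<subseteq> {0}"
  using part_zero_outside in_itype_lane_set by blast+

lemma part_generated_at_NInf:
  assumes "X \<in> {TL, TB}" and "x \<in> part X b"
  shows "\<exists>y\<in>part X NInf. Mp NInf b y = x"
proof -
  have "part X b \<subseteq> Mp NInf b ` part X NInf"
    unfolding part_eq[of X b]
  proof (rule span_minimal)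
    show "subspace (Mp NInf b ` part X NInf)"
      using lin_on_subset[OF Mp_lin_on[OF ble_NInf] part_subset]
      by (rule subspace_image_lin_on[OF part_subspace])
    show "(\<Union>j\<in>{j\<in>J. in_itype X (Iv j)}. N j b) \<subseteq> Mp NInf b ` part X NInf"
    proof clarify
      fix j z assume j: "j \<in> J" "in_itype X (Iv j)" and z: "z \<in> N j b"
      have "NInf \<in> Iv j" using in_itype_NInf_iff[OF j(2)] assms(1) by blast
      then obtain y where "y \<in> N j NInf" "Mp NInf b y = z"
        using iso_interval_module_generated_at_NInf[OF summand_iso[OF j(1)] _ z] by blast
      then show "z \<in> Mp NInf b ` part X NInf" using summand_in_part[OF j] by blast
    qed
  qed
  then show ?thesis using assms(2) by blast
qed

lemma part_inj_to_PInf: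
  assumes "X \<in> {TR, TB}" and x: "x \<in> part X b" and "Mp b PInf x = 0"
  shows "x = 0"
proof -
  let ?J_X = "{j \<in> J. in_itype X (Iv j)}"
  have xs: "x \<in> span (\<Union>j\<in>?J_X. N j b)" using x part_eq by simp
  obtain F y where F: "finite F" "F \<subseteq> ?J_X" and y: "\<And>j. j \<in> F \<Longrightarrow> y j \<in> N j b"
    and x_eq: "x = sum y F"
    using span_summands_obtain_sum[OF _ xs] by blast
  have FJ: "F \<subseteq> J" using F(2) by blast
  have y_Sp: "y j \<in> Sp b" if "j \<in> F" for j
    using summand_subset[of j b] FJ y that by blast
  have "(\<Sum>j\<in>F. Mp b PInf (y j)) = Mp b PInf x"
    unfolding x_eq by (rule Mp_sum[OF ble_PInf y_Sp, symmetric])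
  also have "\<dots> = 0" by fact
  finally have sum_zero: "(\<Sum>j\<in>F. Mp b PInf (y j)) = 0" .
  have "y j = 0" if j: "j \<in> F" for j
  proof (rule iso_interval_module_inj_to_PInf[OF summand_iso])
    show "j \<in> J" using FJ j by blast
    show "PInf \<in> Iv j" using in_itype_PInf_iff assms(1) F(2) j by blast
    show "y j \<in> N j b" using y j .
    have "Mp b PInf (y i) \<in> N i PInf" if "i \<in> F" for i
      using summand_Mp[OF _ ble_PInf] FJ y that by blast
    then show "Mp b PInf (y j) = 0"
      using summands_independent[OF F(1) FJ _ sum_zero j] by blast
  qed
  then show ?thesis using x_eq by simp
qed

definition proj :: "itype \<Rightarrow> bpt \<Rightarrow> 'v \<Rightarrow> 'v" where
  "proj X b x = (THE f. (\<forall>Y. f Y \<in> part Y b) \<and> x = (\<Sum>Y\<in>UNIV. f Y)) X"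

lemma proj_sum_parts:
  assumes f: "\<And>Y. f Y \<in> part Y b"
  shows "proj X b (\<Sum>Y\<in>UNIV. f Y) = f X"
proof -
  have "g = f" if g: "\<forall>Y. g Y \<in> part Y b" "(\<Sum>Y\<in>UNIV. f Y) = (\<Sum>Y\<in>UNIV. g Y)" for g
  proof
    fix Z
    have "g Y - f Y \<in> part Y b" for Y
      using g f by (simp add: subspace_diff[OF part_subspace])
    moreover have "(\<Sum>Y\<in>UNIV. g Y - f Y) = 0"
      using g by (simp add: sum_subtractf)
    ultimately have "g Z - f Z = 0"
      by (rule sum_parts_unique)
    then show "g Z = f Z" by simp
  qed
  then have "(THE g. (\<forall>Y. g Y \<in> part Y b) \<and> (\<Sum>Y\<in>UNIV. f Y) = (\<Sum>Y\<in>UNIV. g Y)) = f"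
    using f by (intro the_equality) auto
  then show ?thesis unfolding proj_def by simp
qed

lemma proj_in_part_and_sum_proj:
  assumes "x \<in> Sp b"
  shows proj_in_part: "proj X b x \<in> part X b"
    and sum_proj: "(\<Sum>Y\<in>UNIV. proj Y b x) = x"
proof -
  obtain f where f: "\<And>Y. f Y \<in> part Y b" and x: "x = (\<Sum>Y\<in>UNIV. f Y)"
    using sum_parts_exists[OF assms] by blast
  have "proj Y b x = f Y" for Y using proj_sum_parts[OF f] x by simp
  then show "proj X b x \<in> part X b" "(\<Sum>Y\<in>UNIV. proj Y b x) = x" using f x by simp_all
qed

lemma proj_in_Sp: "x \<in> Sp b \<Longrightarrow> proj X b x \<in> Sp b"
  using proj_in_part part_subset by blast

lemma proj_part:
  assumes "x \<in> part Y b"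
  shows "proj X b x = (if X = Y then x else 0)"
proof -
  have "(if Z = Y then x else 0) \<in> part Z b" for Z
    using assms subspace_0[OF part_subspace] by simp
  from proj_sum_parts[OF this] show ?thesis by simp
qed

lemma proj_lin_on: "lin_on s s (Sp b) (proj X b)"
proof (rule lin_onI)
  fix x y assume x: "x \<in> Sp b" and y: "y \<in> Sp b"
  have "x + y = (\<Sum>Y\<in>UNIV. proj Y b x + proj Y b y)"
    using sum_proj[OF x] sum_proj[OF y] by (simp add: sum.distrib)
  moreover have "proj Y b x + proj Y b y \<in> part Y b" for Y
    using proj_in_part[OF x] proj_in_part[OF y] by (rule subspace_add[OF part_subspace])
  ultimately show "proj X b (x + y) = proj X b x + proj X b y"
    using proj_sum_parts by simp
next
  fix c x assume x: "x \<in> Sp b"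
  have "s c x = (\<Sum>Y\<in>UNIV. s c (proj Y b x))"
    using sum_proj[OF x] scale_sum_right[of c "\<lambda>Y. proj Y b x" UNIV] by simp
  moreover have "s c (proj Y b x) \<in> part Y b" for Y
    using proj_in_part[OF x] by (rule subspace_scale[OF part_subspace])
  ultimately show "proj X b (s c x) = s c (proj X b x)"
    using proj_sum_parts by simp
qed

lemma proj_Mp:
  assumes "ble b b'" and x: "x \<in> Sp b"
  shows "proj X b' (Mp b b' x) = Mp b b' (proj X b x)"
proof -
  have "Mp b b' x = (\<Sum>Y\<in>UNIV. Mp b b' (proj Y b x))"
    using Mp_sum[OF assms(1), of UNIV "\<lambda>Y. proj Y b x"] sum_proj[OF x] proj_in_Sp[OF x] by simp
  then show ?thesis
    using proj_sum_parts part_Mp[OF assms(1) proj_in_part[OF x]] by simp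
qed

end

section \<open>Interleavings of the parts of given type\<close>

text \<open>The three clauses: generation at minus infinity, embedding into plus infinity,
  disjoint lanes (see morph_part_vanishes).\<close>
definition hom_vanishing :: "itype \<Rightarrow> itype \<Rightarrow> bool" where
  "hom_vanishing X Y \<longleftrightarrow>
     X \<in> {TL, TB} \<and> Y \<in> {TU, TD, TR} \<or> X \<in> {TU, TD, TL} \<and> Y \<in> {TR, TB} \<or> {X, Y} = {TU, TD}"

lemma hom_vanishing_either: "X \<noteq> Y \<Longrightarrow> hom_vanishing X Y \<or> hom_vanishing Y X"
  by (cases X; cases Y) (auto simp: hom_vanishing_def)

locale interval_decomposed_pair =
  V: interval_decomposed s1 SpV MpV J N IvV + W: interval_decomposed s2 SpW MpW K M IvW
  for s1 :: "'k::field \<Rightarrow> 'v::ab_group_add \<Rightarrow> 'v" and SpV MpV and J :: "'j set" and N IvV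
    and s2 :: "'k \<Rightarrow> 'w::ab_group_add \<Rightarrow> 'w" and SpW MpW and K :: "'i set" and M IvW
begin

lemma morph_part_vanishes:
  assumes f: "morph s1 (V.part X) MpV s2 (shSp e (W.part Y)) (shMp e MpW) f"
    and "hom_vanishing X Y" and x: "x \<in> V.part X b"
  shows "f b x = 0"
proof -
  consider "X \<in> {TL, TB}" "Y \<notin> {TL, TB}" | "X \<notin> {TR, TB}" "Y \<in> {TR, TB}"
    | "X = TU" "Y = TD" | "X = TD" "Y = TU"
    using \<open>hom_vanishing X Y\<close> unfolding hom_vanishing_def by (auto simp: doubleton_eq_iff)
  then show ?thesis
  proof cases
    case 1
    show ?thesis
      by (rule morph_vanishes_if_generated_at_NInf[OF f V.part_generated_at_NInf[OF 1(1)] _ _ x])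
        (use W.part_zero_at_NInf[OF 1(2)] W.Mp_zero in \<open>simp_all add: shSp_def shMp_def\<close>)
  next
    case 2
    show ?thesis
      by (rule morph_vanishes_if_inj_to_PInf[OF f V.part_zero_at_PInf[OF 2(1)]
            V.part_Mp[OF ble_PInf] W.part_inj_to_PInf[OF 2(2)] x])
        (simp_all add: shSp_def shMp_def)
  next
    case 3
    have W_zero: "W.part TD (lam e b') \<subseteq> {0}" if "b' \<in> lane_set L1" for b'
      by (rule W.part_zero_off_lane_set(2)) (use lane_sets_disjoint that in auto)
    show ?thesis
      by (rule morph_vanishes_if_disjoint_supports[where Z = "lane_set L1", OF f[unfolded 3] _ _
            x[unfolded 3]])
        (simp_all add: V.part_zero_off_lane_set(1) W_zero shSp_def)
  next
    case 4
    have W_zero: "W.part TU (lam e b') \<subseteq> {0}" if "b' \<in> lane_set L2" for b'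
      by (rule W.part_zero_off_lane_set(1)) (use lane_sets_disjoint that in auto)
    show ?thesis
      by (rule morph_vanishes_if_disjoint_supports[where Z = "lane_set L2", OF f[unfolded 4] _ _
            x[unfolded 4]])
        (simp_all add: V.part_zero_off_lane_set(2) W_zero shSp_def)
  qed
qed

lemma morph_proj_restrict:
  assumes \<alpha>: "morph s1 SpV MpV s2 (shSp e SpW) (shMp e MpW) \<alpha>"
  shows "morph s1 (V.part X) MpV s2 (shSp e (W.part Y)) (shMp e MpW)
    (\<lambda>b x. W.proj Y (lam e b) (\<alpha> b x))"
proof -
  have \<alpha>_in: "\<alpha> b x \<in> SpW (lam e b)" if "x \<in> V.part X b" for b x
    using morph_in[OF \<alpha>] V.part_subset that unfolding shSp_def by blast
  show ?thesis
  proof (rule morphI)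
    fix b
    show "lin_on s1 s2 (V.part X b) (\<lambda>x. W.proj Y (lam e b) (\<alpha> b x))"
      by (rule lin_on_comp[OF lin_on_subset[OF morph_lin_on[OF \<alpha>] V.part_subset] W.proj_lin_on])
        (use \<alpha>_in in blast)
  next
    fix b x assume "x \<in> V.part X b"
    then show "W.proj Y (lam e b) (\<alpha> b x) \<in> shSp e (W.part Y) b"
      using W.proj_in_part \<alpha>_in by (simp add: shSp_def)
  next
    fix b b' x assume bb': "ble b b'" and x: "x \<in> V.part X b"
    have "\<alpha> b' (MpV b b' x) = MpW (lam e b) (lam e b') (\<alpha> b x)"
      using morph_nat[OF \<alpha> bb'] V.part_subset x by (auto simp: shMp_def)
    then show "W.proj Y (lam e b') (\<alpha> b' (MpV b b' x))
        = shMp e MpW b b' (W.proj Y (lam e b) (\<alpha> b x))"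
      using W.proj_Mp[OF ble_lam[OF bb'] \<alpha>_in[OF x]] by (simp add: shMp_def)
  qed
qed

lemma cross_term_vanishes:
  assumes \<alpha>: "morph s1 SpV MpV s2 (shSp e SpW) (shMp e MpW) \<alpha>"
    and \<beta>: "morph s2 SpW MpW s1 (shSp e SpV) (shMp e MpV) \<beta>"
    and "X \<noteq> Y" and x: "x \<in> V.part X b"
  shows "V.proj X (lam e (lam e b)) (\<beta> (lam e b) (W.proj Y (lam e b) (\<alpha> b x))) = 0"
  using hom_vanishing_either[OF \<open>X \<noteq> Y\<close>]
proof
  assume "hom_vanishing X Y"
  then have "W.proj Y (lam e b) (\<alpha> b x) = 0"
    using morph_part_vanishes[OF morph_proj_restrict[OF \<alpha>] _ x] by blast
  moreover have "\<beta> (lam e b) 0 = 0" "V.proj X (lam e (lam e b)) 0 = 0"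
    using morph_zero[OF \<beta> W.subspace_0[OF W.Sp_subspace]]
      lin_on_zero[OF V.proj_lin_on V.subspace_0[OF V.Sp_subspace]] by simp_all
  ultimately show ?thesis by simp
next
  assume "hom_vanishing Y X"
  interpret swap: interval_decomposed_pair s2 SpW MpW K M IvW s1 SpV MpV J N IvV ..
  show ?thesis
    by (rule swap.morph_part_vanishes[OF swap.morph_proj_restrict[OF \<beta>] \<open>hom_vanishing Y X\<close>
          W.proj_in_part])
      (use morph_in[OF \<alpha>] V.part_subset x in \<open>force simp: shSp_def\<close>)
qed

lemma proj_restrict_comp:
  assumes \<alpha>: "morph s1 SpV MpV s2 (shSp e SpW) (shMp e MpW) \<alpha>"
    and \<beta>: "morph s2 SpW MpW s1 (shSp e SpV) (shMp e MpV) \<beta>"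
    and \<beta>\<alpha>: "\<And>b x. x \<in> SpV b \<Longrightarrow> \<beta> (lam e b) (\<alpha> b x) = MpV b (lam (2 * e) b) x"
    and "0 \<le> e" and x: "x \<in> V.part X b"
  shows "V.proj X (lam e (lam e b)) (\<beta> (lam e b) (W.proj X (lam e b) (\<alpha> b x)))
    = MpV b (lam (2 * e) b) x"
proof -
  let ?b1 = "lam e b" and ?b2 = "lam e (lam e b)"
  have b2: "?b2 = lam (2 * e) b" by (simp add: lam_lam)
  have b_b2: "ble b ?b2" using ble_lam_self[of "2 * e" b] \<open>0 \<le> e\<close> b2 by simp
  have x_Sp: "x \<in> SpV b" using x V.part_subset by blast
  have \<alpha>x: "\<alpha> b x \<in> SpW ?b1" using morph_in[OF \<alpha> x_Sp] by (simp add: shSp_def)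
  have \<beta>_in: "\<beta> ?b1 y \<in> SpV ?b2" if "y \<in> SpW ?b1" for y
    using morph_in[OF \<beta> that] by (simp add: shSp_def)
  have "V.proj X ?b2 (\<beta> ?b1 (W.proj X ?b1 (\<alpha> b x)))
      = (\<Sum>Y\<in>{X}. V.proj X ?b2 (\<beta> ?b1 (W.proj Y ?b1 (\<alpha> b x))))"
    by simp
  also have "\<dots> = (\<Sum>Y\<in>UNIV. V.proj X ?b2 (\<beta> ?b1 (W.proj Y ?b1 (\<alpha> b x))))"
    by (rule sum.mono_neutral_left) (use cross_term_vanishes[OF \<alpha> \<beta> _ x] in auto)
  also have "\<dots> = V.proj X ?b2 (\<Sum>Y\<in>UNIV. \<beta> ?b1 (W.proj Y ?b1 (\<alpha> b x)))"
    by (rule V.lin_on_sum[OF V.proj_lin_on V.Sp_subspace \<beta>_in[OF W.proj_in_Sp[OF \<alpha>x]], symmetric])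
  also have "\<dots> = V.proj X ?b2 (\<beta> ?b1 (\<Sum>Y\<in>UNIV. W.proj Y ?b1 (\<alpha> b x)))"
    by (subst W.lin_on_sum[OF morph_lin_on[OF \<beta>] W.Sp_subspace W.proj_in_Sp[OF \<alpha>x]]) (rule refl)
  also have "\<dots> = V.proj X ?b2 (MpV b ?b2 x)"
    using \<beta>\<alpha>[OF x_Sp] W.sum_proj[OF \<alpha>x] b2 by simp
  also have "\<dots> = MpV b ?b2 x"
    using V.proj_part[OF V.part_Mp[OF b_b2 x]] by simp
  finally show ?thesis using b2 by simp
qed

lemma interleaved_parts:
  assumes "0 \<le> e" and "interleaved e s1 SpV MpV s2 SpW MpW"
  shows "interleaved e s1 (V.part X) MpV s2 (W.part X) MpW"
proof -
  obtain \<alpha> \<beta> where \<alpha>: "morph s1 SpV MpV s2 (shSp e SpW) (shMp e MpW) \<alpha>"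
    and \<beta>: "morph s2 SpW MpW s1 (shSp e SpV) (shMp e MpV) \<beta>"
    and \<beta>\<alpha>: "\<And>b x. x \<in> SpV b \<Longrightarrow> \<beta> (lam e b) (\<alpha> b x) = MpV b (lam (2 * e) b) x"
    and \<alpha>\<beta>: "\<And>b y. y \<in> SpW b \<Longrightarrow> \<alpha> (lam e b) (\<beta> b y) = MpW b (lam (2 * e) b) y"
    using assms(2) unfolding interleaved_def by blast
  interpret swap: interval_decomposed_pair s2 SpW MpW K M IvW s1 SpV MpV J N IvV ..
  show ?thesis
    unfolding interleaved_def
    by (intro exI[of _ "\<lambda>b x. W.proj X (lam e b) (\<alpha> b x)"]
        exI[of _ "\<lambda>b y. V.proj X (lam e b) (\<beta> b y)"]
        conjI ballI allI morph_proj_restrict[OF \<alpha>] swap.morph_proj_restrict[OF \<beta>]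
        proj_restrict_comp[OF \<alpha> \<beta> \<beta>\<alpha> assms(1)] swap.proj_restrict_comp[OF \<beta> \<alpha> \<alpha>\<beta> assms(1)])
qed

lemma morph_sum_parts:
  assumes a: "\<And>X. morph s1 (V.part X) MpV s2 (shSp e (W.part X)) (shMp e MpW) (a X)"
  shows "morph s1 SpV MpV s2 (shSp e SpW) (shMp e MpW) (\<lambda>b x. \<Sum>X\<in>UNIV. a X b (V.proj X b x))"
proof -
  have a_in: "a X b (V.proj X b x) \<in> SpW (lam e b)" if "x \<in> SpV b" for X b x
    using morph_in[OF a V.proj_in_part[OF that]] W.part_subset unfolding shSp_def by blast
  show ?thesis
  proof (rule morphI)
    fix b
    show "lin_on s1 s2 (SpV b) (\<lambda>x. \<Sum>X\<in>UNIV. a X b (V.proj X b x))"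
      by (intro W.lin_on_sum_maps lin_on_comp[OF V.proj_lin_on morph_lin_on[OF a]])
        (use V.proj_in_part in blast)
  next
    fix b x assume "x \<in> SpV b"
    then show "(\<Sum>X\<in>UNIV. a X b (V.proj X b x)) \<in> shSp e SpW b"
      unfolding shSp_def using a_in by (intro W.subspace_sum[OF W.Sp_subspace])
  next
    fix b b' x assume bb': "ble b b'" and x: "x \<in> SpV b"
    have "a X b' (V.proj X b' (MpV b b' x)) = MpW (lam e b) (lam e b') (a X b (V.proj X b x))" for X
      using V.proj_Mp[OF bb' x] morph_nat[OF a bb' V.proj_in_part[OF x]] by (simp add: shMp_def)
    moreover have "MpW (lam e b) (lam e b') (\<Sum>X\<in>UNIV. a X b (V.proj X b x))
        = (\<Sum>X\<in>UNIV. MpW (lam e b) (lam e b') (a X b (V.proj X b x)))"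
      by (rule W.Mp_sum[OF ble_lam[OF bb'] a_in[OF x]])
    ultimately show "(\<Sum>X\<in>UNIV. a X b' (V.proj X b' (MpV b b' x)))
        = shMp e MpW b b' (\<Sum>X\<in>UNIV. a X b (V.proj X b x))"
      by (simp add: shMp_def)
  qed
qed

lemma sum_parts_comp:
  assumes a: "\<And>X. morph s1 (V.part X) MpV s2 (shSp e (W.part X)) (shMp e MpW) (a X)"
    and c: "\<And>X. morph s2 (W.part X) MpW s1 (shSp e (V.part X)) (shMp e MpV) (c X)"
    and ca: "\<And>X b x. x \<in> V.part X b \<Longrightarrow> c X (lam e b) (a X b x) = MpV b (lam (2 * e) b) x"
    and "0 \<le> e" and x: "x \<in> SpV b"
  shows "(\<Sum>X\<in>UNIV. c X (lam e b) (W.proj X (lam e b) (\<Sum>Y\<in>UNIV. a Y b (V.proj Y b x))))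
    = MpV b (lam (2 * e) b) x"
proof -
  have "W.proj X (lam e b) (\<Sum>Y\<in>UNIV. a Y b (V.proj Y b x)) = a X b (V.proj X b x)" for X
    using morph_in[OF a V.proj_in_part[OF x]] unfolding shSp_def by (rule W.proj_sum_parts)
  then have "(\<Sum>X\<in>UNIV. c X (lam e b) (W.proj X (lam e b) (\<Sum>Y\<in>UNIV. a Y b (V.proj Y b x))))
      = (\<Sum>X\<in>UNIV. MpV b (lam (2 * e) b) (V.proj X b x))"
    using ca V.proj_in_part[OF x] by simp
  also have "\<dots> = MpV b (lam (2 * e) b) (\<Sum>X\<in>UNIV. V.proj X b x)"
    using \<open>0 \<le> e\<close> by (intro V.Mp_sum[symmetric] ble_lam_self V.proj_in_Sp[OF x]) simp
  also have "\<dots> = MpV b (lam (2 * e) b) x"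
    using V.sum_proj[OF x] by simp
  finally show ?thesis .
qed

lemma interleaved_of_parts:
  assumes "0 \<le> e" and "\<And>X. interleaved e s1 (V.part X) MpV s2 (W.part X) MpW"
  shows "interleaved e s1 SpV MpV s2 SpW MpW"
proof -
  obtain \<alpha> \<beta> where
        \<alpha>: "\<And>X. morph s1 (V.part X) MpV s2 (shSp e (W.part X)) (shMp e MpW) (\<alpha> X)"
    and \<beta>: "\<And>X. morph s2 (W.part X) MpW s1 (shSp e (V.part X)) (shMp e MpV) (\<beta> X)"
    and \<beta>\<alpha>: "\<And>X b x. x \<in> V.part X b \<Longrightarrow> \<beta> X (lam e b) (\<alpha> X b x) = MpV b (lam (2 * e) b) x"
    and \<alpha>\<beta>: "\<And>X b y. y \<in> W.part X b \<Longrightarrow> \<alpha> X (lam e b) (\<beta> X b y) = MpW b (lam (2 * e) b) y"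
    using assms(2) unfolding interleaved_def by metis
  interpret swap: interval_decomposed_pair s2 SpW MpW K M IvW s1 SpV MpV J N IvV ..
  show ?thesis
    unfolding interleaved_def
    by (intro exI[of _ "\<lambda>b x. \<Sum>X\<in>UNIV. \<alpha> X b (V.proj X b x)"]
        exI[of _ "\<lambda>b y. \<Sum>X\<in>UNIV. \<beta> X b (W.proj X b y)"]
        conjI ballI allI morph_sum_parts[OF \<alpha>] swap.morph_sum_parts[OF \<beta>]
        sum_parts_comp[OF \<alpha> \<beta> \<beta>\<alpha> assms(1)] swap.sum_parts_comp[OF \<beta> \<alpha> \<alpha>\<beta> assms(1)])
qed

end

theorem proposition4p6:
  fixes s1 :: "'k::field \<Rightarrow> 'v::ab_group_add \<Rightarrow> 'v"
    and s2 :: "'k \<Rightarrow> 'w::ab_group_add \<Rightarrow> 'w"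
    and SpV :: "bpt \<Rightarrow> 'v set" and MpV :: "bpt \<Rightarrow> bpt \<Rightarrow> 'v \<Rightarrow> 'v"
    and SpW :: "bpt \<Rightarrow> 'w set" and MpW :: "bpt \<Rightarrow> bpt \<Rightarrow> 'w \<Rightarrow> 'w"
    and J :: "'j set" and N :: "'j \<Rightarrow> bpt \<Rightarrow> 'v set" and IvV :: "'j \<Rightarrow> bpt set"
    and K :: "'i set" and M :: "'i \<Rightarrow> bpt \<Rightarrow> 'w set" and IvW :: "'i \<Rightarrow> bpt set"
    and e :: real
  assumes "pfd s1 SpV MpV" and "pfd s2 SpW MpW"
    and "interval_decomp s1 SpV MpV J N IvV"
    and "interval_decomp s2 SpW MpW K M IvW"
    and "e \<ge> 0"
  shows "interleaved e s1 SpV MpV s2 SpW MpW \<longleftrightarrow>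
    (\<forall>X. interleaved e s1 (partSp s1 J N IvV X) MpV s2 (partSp s2 K M IvW X) MpW)"
proof -
  interpret interval_decomposed_pair s1 SpV MpV J N IvV s2 SpW MpW K M IvW
    using assms(1-4) unfolding pfd_def
    by (simp add: interval_decomposed_pair_def interval_decomposed_def)
  show ?thesis
    using interleaved_parts interleaved_of_parts \<open>e \<ge> 0\<close> by blast
qed

end
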